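(* Let $A$ be a partially ordered set that has a top element $\top$ and a bottom element $\bot$. Then every passable game over $A$ is equivalent to a monotone game over $A$.
   Context: Games over a poset $A$ are defined inductively: for each $a\in A$ there is an atomic game $[a]$ (often written $a$), which has no options; and if $L$ and $R$ are non-empty sets of games, then $\{L\mid R\}$ is a composite game with set of left options $L$ and set of right options $R$. The relations $\le$ and $\lhd$ on games over $A$ are defined by simultaneous recursion: $G\le H$ iff (1) every left option $G^L$ of $G$ satisfies $G^L\lhd H$, (2) every right option $H^R$ of $H$ satisfies $G\lhd H^R$, and (3) if $G$ or $H$ is atomic then $G\lhd H$; and $G\lhd H$ iff (1) some right option $G^R$ of $G$ satisfies $G^R\le H$, or (2) some left option $H^L$ of $H$ satisfies $G\le H^L$, or (3) $G=[a]$ and $H=[b]$ are both atomic and $a\le b$ in $A$. Games $G,H$ are equivalent, $G\equiv H$, if $G\le H$ and $H\le G$. A game $G$ is passable if $G\lhd G$ and (recursively) all its left and right options are passable. A left option $G^L$ of $G$ is good if $G\le G^L$; a right option $G^R$ is good if $G^R\le G$. A game is monotone if all of its left and right options are good and (recursively) all its options are monotone; atomic games are monotone. *)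

theory Defs
  imports Main
begin

text \<open>A composite game is represented as
  Comp L R f: its left options are the games f i with i in L, its right options
  the games f i with i in R. The index type 'i bounds the size of option sets;
  the theorem is stated for an arbitrary index type. The relations \<le>, \<lhd> are
  defined between games of possibly different index types (they only depend on the
  option sets), so that a witness may be represented with a larger index type.\<close>

datatype ('a, 'i) game = Atom 'a | Comp "'i set" "'i set" "'i \<Rightarrow> ('a, 'i) game"

fun lopts :: "('a, 'i) game \<Rightarrow> ('a, 'i) game set" where
  "lopts (Atom a) = {}"
| "lopts (Comp L R f) = f ` L"

fun ropts :: "('a, 'i) game \<Rightarrow> ('a, 'i) game set" where
  "ropts (Atom a) = {}"
| "ropts (Comp L R f) = f ` R"

fun is_atom :: "('a, 'i) game \<Rightarrow> bool" where
  "is_atom (Atom a) = True"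
| "is_atom (Comp L R f) = False"

primrec wf_game :: "('a, 'i) game \<Rightarrow> bool" where
  "wf_game (Atom a) = True"
| "wf_game (Comp L R f) = (L \<noteq> {} \<and> R \<noteq> {} \<and> (\<forall>i. i \<in> L \<union> R \<longrightarrow> wf_game (f i)))"

text \<open>The relations \<le> and \<lhd>, defined by simultaneous (well-founded) recursion;
  as an inductive definition (least fixed point, which coincides with the recursive one).\<close>
inductive game_le :: "('a::order, 'i) game \<Rightarrow> ('a, 'j) game \<Rightarrow> bool"
  and game_lf :: "('a::order, 'i) game \<Rightarrow> ('a, 'j) game \<Rightarrow> bool"
where
  le_intro: "(\<forall>GL. GL \<in> lopts G \<longrightarrow> game_lf GL H) \<Longrightarrow>
             (\<forall>HR. HR \<in> ropts H \<longrightarrow> game_lf G HR) \<Longrightarrow>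
             ((is_atom G \<or> is_atom H) \<longrightarrow> game_lf G H) \<Longrightarrow> game_le G H"
| lf_right: "GR \<in> ropts G \<Longrightarrow> game_le GR H \<Longrightarrow> game_lf G H"
| lf_left: "HL \<in> lopts H \<Longrightarrow> game_le G HL \<Longrightarrow> game_lf G H"
| lf_atom: "a \<le> b \<Longrightarrow> game_lf (Atom a) (Atom b)"

definition game_equiv :: "('a::order, 'i) game \<Rightarrow> ('a, 'j) game \<Rightarrow> bool" where
  "game_equiv G H \<longleftrightarrow> game_le G H \<and> game_le H G"

primrec passable :: "('a::order, 'i) game \<Rightarrow> bool" where
  "passable (Atom a) = game_lf (Atom a :: ('a, 'i) game) (Atom a :: ('a, 'i) game)"
| "passable (Comp L R f) = (game_lf (Comp L R f :: ('a, 'i) game) (Comp L R f :: ('a, 'i) game) \<and>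
      (\<forall>i. i \<in> L \<union> R \<longrightarrow> passable (f i)))"

primrec monotone_game :: "('a::order, 'i) game \<Rightarrow> bool" where
  "monotone_game (Atom a) = True"
| "monotone_game (Comp L R f) =
     ((\<forall>i. i \<in> L \<longrightarrow> game_le (Comp L R f) (f i)) \<and>
      (\<forall>i. i \<in> R \<longrightarrow> game_le (f i) (Comp L R f)) \<and>
      (\<forall>i. i \<in> L \<union> R \<longrightarrow> monotone_game (f i)))"

end

theory Submission
  imports Defs
begin

text \<open>By induction, every option \<open>f i\<close> of a passable game \<open>G = {L | R}\<close> is equivalent to a
  monotone game \<open>F i\<close>. The gadgets \<open>up K = {\<top> | K}\<close> and \<open>down K = {K | \<bottom>}\<close> turn \<open>\<lhd>\<close>
  into \<open>\<le>\<close>: \<open>X \<le> up K\<close> iff \<open>X \<lhd> K\<close>, \<open>down K \<le> Y\<close> iff \<open>K \<lhd> Y\<close>, and both are monotone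
  when \<open>K\<close> is monotone with \<open>K \<lhd> K\<close>. Hence \<open>{up S | down T}\<close> is monotone and equivalent
  to \<open>G\<close> as soon as \<open>S\<close>, \<open>T\<close> are monotone with \<open>S \<le> G \<le> T\<close>, \<open>G \<lhd> S\<close>, \<open>T \<lhd> G\<close>, every
  \<open>G\<^sup>L \<lhd> S\<close> and \<open>T \<lhd>\<close> every \<open>G\<^sup>R\<close>. Passability \<open>G \<lhd> G\<close> provides a right option
  \<open>f r \<le> G\<close> or a left option \<open>G \<le> f l\<close>; from it and the \<open>F i\<close>, padded with \<open>up\<close> and
  \<open>down\<close> and with an extra option \<open>\<bottom>\<close> or \<open>\<top>\<close> that makes the padding monotone, one
  assembles \<open>S\<close> and \<open>T\<close>.\<close>

lemma game_le_iff:
  "game_le G H \<longleftrightarrow> (\<forall>GL\<in>lopts G. game_lf GL H) \<and> (\<forall>HR\<in>ropts H. game_lf G HR) \<and>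
     ((is_atom G \<or> is_atom H) \<longrightarrow> game_lf G H)"
  by (subst game_le.simps) auto

lemma game_lf_iff:
  "game_lf G H \<longleftrightarrow> (\<exists>GR\<in>ropts G. game_le GR H) \<or> (\<exists>HL\<in>lopts H. game_le G HL) \<or>
     (\<exists>a b. G = Atom a \<and> H = Atom b \<and> a \<le> b)"
  by (subst game_lf.simps) auto

lemma game_le_lf_lopt: "game_le G H \<Longrightarrow> GL \<in> lopts G \<Longrightarrow> game_lf GL H"
  and game_le_lf_ropt: "game_le G H \<Longrightarrow> HR \<in> ropts H \<Longrightarrow> game_lf G HR"
  and game_le_lf_atom: "game_le G H \<Longrightarrow> is_atom G \<or> is_atom H \<Longrightarrow> game_lf G H"
  unfolding game_le_iff by blast+

lemma game_option_induct:
  assumes "\<And>G. (\<And>G'. G' \<in> lopts G \<union> ropts G \<Longrightarrow> P G') \<Longrightarrow> P G"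
  shows "P G"
proof (induction G)
  case (Atom a)
  then show ?case by (rule assms) simp
next
  case (Comp L R f)
  then show ?case by (rule assms) auto
qed

lemma is_atom_iff: "is_atom G \<longleftrightarrow> (\<exists>a. G = Atom a)"
  by (cases G) auto

lemma wf_game_option: "wf_game G \<Longrightarrow> G' \<in> lopts G \<union> ropts G \<Longrightarrow> wf_game G'"
  by (cases G) auto

lemma wf_game_options_nonempty: "wf_game G \<Longrightarrow> \<not> is_atom G \<Longrightarrow> lopts G \<noteq> {} \<and> ropts G \<noteq> {}"
  by (cases G) auto

lemma passable_lf_self: "passable G \<Longrightarrow> game_lf G G"
  by (cases G) auto

lemma monotone_gameI:
  "(\<And>GL. GL \<in> lopts G \<Longrightarrow> game_le G GL \<and> monotone_game GL) \<Longrightarrow>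
   (\<And>GR. GR \<in> ropts G \<Longrightarrow> game_le GR G \<and> monotone_game GR) \<Longrightarrow> monotone_game G"
  by (cases G) auto

lemma game_le_refl: "game_le G G"
proof (induction G rule: game_option_induct)
  case (1 G)
  show ?case
    unfolding game_le_iff
  proof (intro conjI ballI impI)
    fix GL assume "GL \<in> lopts G"
    with 1 show "game_lf GL G" by (blast intro: lf_left)
  next
    fix GR assume "GR \<in> ropts G"
    with 1 show "game_lf G GR" by (blast intro: lf_right)
  next
    assume "is_atom G \<or> is_atom G"
    then show "game_lf G G" by (auto simp: is_atom_iff intro: lf_atom)
  qed
qed

lemma game_le_Atom: "game_le (Atom a :: ('a::order, 'i) game) (Atom a :: ('a, 'j) game)"
  by (auto simp: game_le_iff intro: lf_atom)

definition trans_at :: "('a::order, 'i) game \<Rightarrow> ('a, 'j) game \<Rightarrow> ('a, 'k) game \<Rightarrow> bool" where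
  "trans_at G H K \<longleftrightarrow> (game_le G H \<longrightarrow> game_le H K \<longrightarrow> game_le G K) \<and>
     (game_lf G H \<longrightarrow> game_le H K \<longrightarrow> game_lf G K) \<and>
     (game_le G H \<longrightarrow> game_lf H K \<longrightarrow> game_lf G K)"

definition trans_below :: "('a::order, 'i) game \<Rightarrow> ('a, 'j) game \<Rightarrow> ('a, 'k) game \<Rightarrow> bool" where
  "trans_below G H K \<longleftrightarrow>
     (\<forall>G' \<in> lopts G \<union> ropts G. \<forall>(H' :: ('a, 'j) game) (K' :: ('a, 'k) game). trans_at G' H' K') \<and>
     (\<forall>H' \<in> lopts H \<union> ropts H. \<forall>K' :: ('a, 'k) game. trans_at G H' K') \<and>
     (\<forall>K' \<in> lopts K \<union> ropts K. trans_at G H K')"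

lemma trans_belowD:
  assumes "trans_below G H K"
  shows "G' \<in> lopts G \<union> ropts G \<Longrightarrow> trans_at G' H' K'"
    and "H' \<in> lopts H \<union> ropts H \<Longrightarrow> trans_at G H' K'"
    and "K' \<in> lopts K \<union> ropts K \<Longrightarrow> trans_at G H K'"
  using assms by (auto simp: trans_below_def)

lemma lf_le_of_trans_below:
  assumes below: "trans_below G H K" and GH: "game_lf G H" and HK: "game_le H K"
  shows "game_lf G K"
proof -
  from GH consider (right) GR where "GR \<in> ropts G" "game_le GR H"
    | (left) HL where "HL \<in> lopts H" "game_le G HL"
    | (atoms) a b where "G = Atom a" "H = Atom b" "a \<le> b"
    unfolding game_lf_iff by blast
  then show ?thesis
  proof cases
    case right
    with trans_belowD(1)[OF below, of GR H K] HK have "game_le GR K" by (simp add: trans_at_def)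
    with right(1) show ?thesis by (rule lf_right)
  next
    case left
    with HK have "game_lf HL K" by (simp add: game_le_lf_lopt)
    with trans_belowD(2)[OF below, of HL K] left show ?thesis by (simp add: trans_at_def)
  next
    case atoms
    from HK atoms have "game_lf H K" by (simp add: game_le_lf_atom)
    with atoms consider (left') KL where "KL \<in> lopts K" "game_le H KL"
      | (atom') c where "K = Atom c" "b \<le> c"
      unfolding game_lf_iff by auto
    then show ?thesis
    proof cases
      case left'
      from atoms have "game_le G H" by (simp add: game_le_iff lf_atom)
      with trans_belowD(3)[OF below, of KL] left' have "game_le G KL" by (simp add: trans_at_def)
      with left'(1) show ?thesis by (rule lf_left)
    next
      case atom'
      with atoms show ?thesis by (simp add: lf_atom)
    qed
  qed
qed

lemma le_lf_of_trans_below: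
  assumes below: "trans_below G H K" and GH: "game_le G H" and HK: "game_lf H K"
  shows "game_lf G K"
proof -
  from HK consider (right) HR where "HR \<in> ropts H" "game_le HR K"
    | (left) KL where "KL \<in> lopts K" "game_le H KL"
    | (atoms) b c where "H = Atom b" "K = Atom c" "b \<le> c"
    unfolding game_lf_iff by blast
  then show ?thesis
  proof cases
    case right
    with GH have "game_lf G HR" by (simp add: game_le_lf_ropt)
    with trans_belowD(2)[OF below, of HR K] right show ?thesis by (simp add: trans_at_def)
  next
    case left
    with trans_belowD(3)[OF below, of KL] GH have "game_le G KL" by (simp add: trans_at_def)
    with left(1) show ?thesis by (rule lf_left)
  next
    case atoms
    from GH atoms have "game_lf G H" by (simp add: game_le_lf_atom)
    with atoms consider (right') GR where "GR \<in> ropts G" "game_le GR H"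
      | (atom') a where "G = Atom a" "a \<le> b"
      unfolding game_lf_iff by auto
    then show ?thesis
    proof cases
      case right'
      from atoms have "game_le H K" by (simp add: game_le_iff lf_atom)
      with trans_belowD(1)[OF below, of GR H K] right' have "game_le GR K" by (simp add: trans_at_def)
      with right'(1) show ?thesis by (rule lf_right)
    next
      case atom'
      with atoms show ?thesis by (simp add: lf_atom)
    qed
  qed
qed

lemma le_le_of_trans_below:
  assumes below: "trans_below G H K" and GH: "game_le G H" and HK: "game_le H K"
  shows "game_le G K"
  unfolding game_le_iff
proof (intro conjI ballI impI)
  fix GL assume "GL \<in> lopts G"
  with trans_belowD(1)[OF below, of GL H K] GH HK show "game_lf GL K"
    by (simp add: trans_at_def game_le_lf_lopt)
next
  fix KR assume "KR \<in> ropts K"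
  with trans_belowD(3)[OF below, of KR] GH HK show "game_lf G KR"
    by (simp add: trans_at_def game_le_lf_ropt)
next
  assume "is_atom G \<or> is_atom K"
  then show "game_lf G K"
  proof
    assume "is_atom G"
    with GH have "game_lf G H" by (simp add: game_le_lf_atom)
    with below show ?thesis using HK by (rule lf_le_of_trans_below)
  next
    assume "is_atom K"
    with HK have "game_lf H K" by (simp add: game_le_lf_atom)
    with below GH show ?thesis by (rule le_lf_of_trans_below)
  qed
qed

lemma trans_at:
  fixes G :: "('a::order, 'i) game" and H :: "('a, 'j) game" and K :: "('a, 'k) game"
  shows "trans_at G H K"
proof (induction G arbitrary: H K rule: game_option_induct)
  case IG: (1 G)
  have "trans_at G H K" for H :: "('a, 'j) game" and K :: "('a, 'k) game"
  proof (induction H arbitrary: K rule: game_option_induct)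
    case IH: (1 H)
    show ?case
    proof (induction K rule: game_option_induct)
      case IK: (1 K)
      then have "trans_below G H K"
        using IG IH by (simp add: trans_below_def)
      then show ?case
        unfolding trans_at_def
        using lf_le_of_trans_below le_lf_of_trans_below le_le_of_trans_below by blast
    qed
  qed
  then show ?case .
qed

lemma game_le_trans: "game_le G H \<Longrightarrow> game_le H K \<Longrightarrow> game_le G K"
  and game_lf_le_trans: "game_lf G H \<Longrightarrow> game_le H K \<Longrightarrow> game_lf G K"
  and game_le_lf_trans: "game_le G H \<Longrightarrow> game_lf H K \<Longrightarrow> game_lf G K"
  using trans_at[of G H K] by (auto simp: trans_at_def)

lemma game_le_lf_Atom_top:
  fixes G :: "('a::order_top, 'i) game"
  assumes "wf_game G"
  shows "game_le G (Atom top :: ('a, 'j) game) \<and> game_lf G (Atom top :: ('a, 'j) game)"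
  using assms
proof (induction G rule: game_option_induct)
  case (1 G)
  have "game_lf G (Atom top :: ('a, 'j) game)"
  proof (cases "is_atom G")
    case True
    then show ?thesis by (auto simp: is_atom_iff intro: lf_atom)
  next
    case False
    then obtain GR where "GR \<in> ropts G"
      using wf_game_options_nonempty[OF "1.prems"] by auto
    with 1 show ?thesis by (auto intro: lf_right dest: wf_game_option)
  qed
  with 1 show ?case by (auto simp: game_le_iff dest: wf_game_option)
qed

lemma game_le_lf_Atom_bot:
  fixes G :: "('a::order_bot, 'i) game"
  assumes "wf_game G"
  shows "game_le (Atom bot :: ('a, 'j) game) G \<and> game_lf (Atom bot :: ('a, 'j) game) G"
  using assms
proof (induction G rule: game_option_induct)
  case (1 G)
  have "game_lf (Atom bot :: ('a, 'j) game) G"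
  proof (cases "is_atom G")
    case True
    then show ?thesis by (auto simp: is_atom_iff intro: lf_atom)
  next
    case False
    then obtain GL where "GL \<in> lopts G"
      using wf_game_options_nonempty[OF "1.prems"] by auto
    with 1 show ?thesis by (auto intro: lf_left dest: wf_game_option)
  qed
  with 1 show ?case by (auto simp: game_le_iff dest: wf_game_option)
qed

lemma game_lf_of_Atom_top_lopt:
  "wf_game (G :: ('a::order_top, 'i) game) \<Longrightarrow> Atom top \<in> lopts H \<Longrightarrow> game_lf G H"
  using game_le_lf_Atom_top by (blast intro: lf_left)

lemma game_lf_of_Atom_bot_ropt:
  "wf_game (H :: ('a::order_bot, 'i) game) \<Longrightarrow> Atom bot \<in> ropts G \<Longrightarrow> game_lf G H"
  using game_le_lf_Atom_bot by (blast intro: lf_right)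

type_synonym ('a, 'i) wide_game = "('a, ('a, 'i) game set) game"

text \<open>Witnesses need the indices of \<open>G\<close> plus two fresh ones; \<open>tag\<close> embeds
  \<open>'i option option\<close> into the index type \<open>('a, 'i) game set\<close> fixed by the theorem.\<close>

fun tag :: "'i option option \<Rightarrow> ('a, 'i) game set" where
  "tag None = {}"
| "tag (Some None) = {Atom undefined}"
| "tag (Some (Some i)) = {Comp {i} {} (\<lambda>_. Atom undefined)}"

lemma inj_tag: "inj tag"
proof (rule injI)
  fix k k' :: "'a option option"
  show "tag k = tag k' \<Longrightarrow> k = k'"
    by (cases k rule: tag.cases; cases k' rule: tag.cases) auto
qed

definition Comp_tagged ::
  "'i option option set \<Rightarrow> 'i option option set \<Rightarrow> ('i option option \<Rightarrow> ('a, 'i) wide_game) \<Rightarrow> ('a, 'i) wide_game"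
  where "Comp_tagged L R g = Comp (tag ` L) (tag ` R) (g \<circ> inv tag)"

lemma Comp_tagged_simps [simp]:
  "lopts (Comp_tagged L R g) = g ` L"
  "ropts (Comp_tagged L R g) = g ` R"
  "\<not> is_atom (Comp_tagged L R g)"
  "wf_game (Comp_tagged L R g) \<longleftrightarrow> L \<noteq> {} \<and> R \<noteq> {} \<and> (\<forall>k \<in> L \<union> R. wf_game (g k))"
  by (auto simp: Comp_tagged_def image_comp inv_f_f[OF inj_tag])

definition pair :: "('a, 'i) wide_game \<Rightarrow> ('a, 'i) wide_game \<Rightarrow> ('a, 'i) wide_game" where
  "pair X Y = Comp_tagged {None} {Some None} (\<lambda>k. if k = None then X else Y)"

lemma pair_simps [simp]:
  "lopts (pair X Y) = {X}"
  "ropts (pair X Y) = {Y}"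
  "\<not> is_atom (pair X Y)"
  "wf_game (pair X Y) \<longleftrightarrow> wf_game X \<and> wf_game Y"
  by (auto simp: pair_def)

definition up :: "('a::order_top, 'i) wide_game \<Rightarrow> ('a, 'i) wide_game" where
  "up K = pair (Atom top) K"

definition down :: "('a::order_bot, 'i) wide_game \<Rightarrow> ('a, 'i) wide_game" where
  "down K = pair K (Atom bot)"

lemma up_simps [simp]:
  "lopts (up K) = {Atom top}" "ropts (up K) = {K}" "\<not> is_atom (up K)" "wf_game (up K) \<longleftrightarrow> wf_game K"
  by (simp_all add: up_def)

lemma down_simps [simp]:
  "lopts (down K) = {K}" "ropts (down K) = {Atom bot}" "\<not> is_atom (down K)" "wf_game (down K) \<longleftrightarrow> wf_game K"
  by (simp_all add: down_def)

lemma game_le_up_iff: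
  assumes "wf_game G"
  shows "game_le G (up K) \<longleftrightarrow> game_lf G K"
proof
  assume "game_lf G K"
  with assms show "game_le G (up K)"
    by (auto simp: game_le_iff intro: game_lf_of_Atom_top_lopt dest: wf_game_option)
qed (simp add: game_le_lf_ropt)

lemma game_down_le_iff:
  assumes "wf_game H"
  shows "game_le (down K) H \<longleftrightarrow> game_lf K H"
proof
  assume "game_lf K H"
  with assms show "game_le (down K) H"
    by (auto simp: game_le_iff intro: game_lf_of_Atom_bot_ropt dest: wf_game_option)
qed (simp add: game_le_lf_lopt)

lemma game_up_lf: "game_le K H \<Longrightarrow> game_lf (up K) H"
  by (rule lf_right) simp_all

lemma game_lf_down: "game_le G K \<Longrightarrow> game_lf G (down K)"
  by (rule lf_left) simp_all

lemma monotone_up: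
  assumes "wf_game K" "monotone_game K" "game_lf K K"
  shows "monotone_game (up K)"
proof (rule monotone_gameI)
  show "game_le (up K) GL \<and> monotone_game GL" if "GL \<in> lopts (up K)" for GL
    using that assms(1) by (simp add: game_le_lf_Atom_top)
  show "game_le GR (up K) \<and> monotone_game GR" if "GR \<in> ropts (up K)" for GR
    using that assms by (simp add: game_le_up_iff)
qed

lemma monotone_down:
  assumes "wf_game K" "monotone_game K" "game_lf K K"
  shows "monotone_game (down K)"
proof (rule monotone_gameI)
  show "game_le (down K) GL \<and> monotone_game GL" if "GL \<in> lopts (down K)" for GL
    using that assms by (simp add: game_down_le_iff)
  show "game_le GR (down K) \<and> monotone_game GR" if "GR \<in> ropts (down K)" for GR
    using that assms(1) by (simp add: game_le_lf_Atom_bot)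
qed

lemma monotone_up_down:
  "wf_game K \<Longrightarrow> monotone_game K \<Longrightarrow> game_lf K K \<Longrightarrow> monotone_game (up (down K))"
  by (intro monotone_up monotone_down) (simp_all add: game_lf_of_Atom_bot_ropt)

lemma monotone_down_up:
  "wf_game K \<Longrightarrow> monotone_game K \<Longrightarrow> game_lf K K \<Longrightarrow> monotone_game (down (up K))"
  by (intro monotone_up monotone_down) (simp_all add: game_lf_of_Atom_top_lopt)

definition bracket :: "('a::{order_bot, order_top}, 'i) wide_game \<Rightarrow> ('a, 'i) wide_game \<Rightarrow> ('a, 'i) wide_game" where
  "bracket S T = pair (up S) (down T)"

lemma bracket_simps [simp]:
  "lopts (bracket S T) = {up S}" "ropts (bracket S T) = {down T}"
  "wf_game (bracket S T) \<longleftrightarrow> wf_game S \<and> wf_game T"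
  by (simp_all add: bracket_def)

lemma game_bracket_lf: "wf_game H \<Longrightarrow> game_lf T H \<Longrightarrow> game_lf (bracket S T) H"
  by (rule lf_right[of "down T"]) (simp_all add: game_down_le_iff)

lemma game_lf_bracket: "wf_game G \<Longrightarrow> game_lf G S \<Longrightarrow> game_lf G (bracket S T)"
  by (rule lf_left[of "up S"]) (simp_all add: game_le_up_iff)

lemma game_bracket_le:
  assumes "wf_game H" "game_le S H" "game_lf T H" "\<And>HR. HR \<in> ropts H \<Longrightarrow> game_lf T HR"
  shows "game_le (bracket S T) H"
  using assms by (auto simp: game_le_iff game_up_lf intro: game_bracket_lf dest: wf_game_option)

lemma game_le_bracket:
  assumes "wf_game G" "game_le G T" "game_lf G S" "\<And>GL. GL \<in> lopts G \<Longrightarrow> game_lf GL S"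
  shows "game_le G (bracket S T)"
  using assms by (auto simp: game_le_iff game_lf_down intro: game_lf_bracket dest: wf_game_option)

lemma monotone_bracket:
  assumes "wf_game S" "monotone_game S" "game_lf S S"
    and "wf_game T" "monotone_game T" "game_lf T T"
    and "game_lf (bracket S T) S" "game_lf T (bracket S T)"
  shows "monotone_game (bracket S T)"
  using assms by (intro monotone_gameI)
    (auto simp: game_le_up_iff game_down_le_iff intro: monotone_up monotone_down)

definition left_pad ::
  "('a::{order_bot, order_top}, 'i) wide_game \<Rightarrow> ('i \<Rightarrow> ('a, 'i) wide_game) \<Rightarrow> 'i set \<Rightarrow> ('a, 'i) wide_game"
  where "left_pad X F L = Comp_tagged (insert None (Some ` Some ` L)) {Some None}
    (\<lambda>k. case k of None \<Rightarrow> X | Some None \<Rightarrow> Atom bot | Some (Some l) \<Rightarrow> up (down (F l)))"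

lemma left_pad_simps [simp]:
  "lopts (left_pad X F L) = insert X ((\<lambda>l. up (down (F l))) ` L)"
  "ropts (left_pad X F L) = {Atom bot}"
  "wf_game (left_pad X F L) \<longleftrightarrow> wf_game X \<and> (\<forall>l\<in>L. wf_game (F l))"
  by (auto simp: left_pad_def image_image)

lemma game_left_pad_lf: "wf_game H \<Longrightarrow> game_lf (left_pad X F L) H"
  by (rule game_lf_of_Atom_bot_ropt) simp_all

lemma game_left_pad_le:
  assumes "wf_game H" "game_lf X H" "\<And>l. l \<in> L \<Longrightarrow> game_lf (F l) H"
  shows "game_le (left_pad X F L) H"
  unfolding game_le_iff
proof (intro conjI ballI impI)
  fix GL assume "GL \<in> lopts (left_pad X F L)"
  with assms show "game_lf GL H"
    by (auto simp: game_down_le_iff intro: game_up_lf)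
qed (use assms(1) in \<open>auto intro: game_left_pad_lf dest: wf_game_option\<close>)

lemma game_lf_left_pad: "game_le G X \<Longrightarrow> game_lf G (left_pad X F L)"
  by (rule lf_left) simp_all

lemma game_lf_left_pad_of_le:
  assumes "l \<in> L" "wf_game G" "game_le G (F l)"
  shows "game_lf G (left_pad X F L)"
  by (rule lf_left[of "up (down (F l))"]) (use assms in \<open>simp_all add: game_le_up_iff game_lf_down\<close>)

lemma monotone_left_pad:
  assumes "wf_game X" "monotone_game X" "game_le (left_pad X F L) X"
    and "\<And>l. l \<in> L \<Longrightarrow> wf_game (F l) \<and> monotone_game (F l) \<and> game_lf (F l) (F l)"
  shows "monotone_game (left_pad X F L)"
proof (rule monotone_gameI)
  have wf: "wf_game (left_pad X F L)"
    using assms by simp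
  show "game_le (left_pad X F L) GL \<and> monotone_game GL" if "GL \<in> lopts (left_pad X F L)" for GL
    using that assms wf by (auto simp: game_le_up_iff game_left_pad_lf monotone_up_down)
  show "game_le GR (left_pad X F L) \<and> monotone_game GR" if "GR \<in> ropts (left_pad X F L)" for GR
    using that wf by (simp add: game_le_lf_Atom_bot)
qed

definition right_pad ::
  "('a::{order_bot, order_top}, 'i) wide_game \<Rightarrow> ('i \<Rightarrow> ('a, 'i) wide_game) \<Rightarrow> 'i set \<Rightarrow> ('a, 'i) wide_game"
  where "right_pad Y F R = Comp_tagged {Some None} (insert None (Some ` Some ` R))
    (\<lambda>k. case k of None \<Rightarrow> Y | Some None \<Rightarrow> Atom top | Some (Some r) \<Rightarrow> down (up (F r)))"

lemma right_pad_simps [simp]: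
  "lopts (right_pad Y F R) = {Atom top}"
  "ropts (right_pad Y F R) = insert Y ((\<lambda>r. down (up (F r))) ` R)"
  "wf_game (right_pad Y F R) \<longleftrightarrow> wf_game Y \<and> (\<forall>r\<in>R. wf_game (F r))"
  by (auto simp: right_pad_def image_image)

lemma game_lf_right_pad: "wf_game G \<Longrightarrow> game_lf G (right_pad Y F R)"
  by (rule game_lf_of_Atom_top_lopt) simp_all

lemma game_le_right_pad:
  assumes "wf_game G" "game_lf G Y" "\<And>r. r \<in> R \<Longrightarrow> game_lf G (F r)"
  shows "game_le G (right_pad Y F R)"
  unfolding game_le_iff
proof (intro conjI ballI impI)
  fix GR assume "GR \<in> ropts (right_pad Y F R)"
  with assms show "game_lf G GR"
    by (auto simp: game_le_up_iff intro: game_lf_down)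
qed (use assms(1) in \<open>auto intro: game_lf_right_pad dest: wf_game_option\<close>)

lemma game_right_pad_lf: "game_le Y H \<Longrightarrow> game_lf (right_pad Y F R) H"
  by (rule lf_right) simp_all

lemma game_right_pad_lf_of_le:
  assumes "r \<in> R" "wf_game H" "game_le (F r) H"
  shows "game_lf (right_pad Y F R) H"
  by (rule lf_right[of "down (up (F r))"]) (use assms in \<open>simp_all add: game_down_le_iff game_up_lf\<close>)

lemma monotone_right_pad:
  assumes "wf_game Y" "monotone_game Y" "game_le Y (right_pad Y F R)"
    and "\<And>r. r \<in> R \<Longrightarrow> wf_game (F r) \<and> monotone_game (F r) \<and> game_lf (F r) (F r)"
  shows "monotone_game (right_pad Y F R)"
proof (rule monotone_gameI)
  have wf: "wf_game (right_pad Y F R)"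
    using assms by simp
  show "game_le (right_pad Y F R) GL \<and> monotone_game GL" if "GL \<in> lopts (right_pad Y F R)" for GL
    using that wf by (simp add: game_le_lf_Atom_top)
  show "game_le GR (right_pad Y F R) \<and> monotone_game GR" if "GR \<in> ropts (right_pad Y F R)" for GR
    using that assms wf by (auto simp: game_down_le_iff game_lf_right_pad monotone_down_up)
qed

lemma game_right_pad_lf_left_pad_up:
  assumes "wf_game (right_pad Y F R)"
  shows "game_lf (right_pad Y F R) (left_pad (up Y) F' L)"
proof -
  have "game_lf (right_pad Y F R) Y"
    by (rule game_right_pad_lf[OF game_le_refl])
  with assms have "game_le (right_pad Y F R) (up Y)"
    by (simp add: game_le_up_iff)
  then show ?thesis
    by (rule game_lf_left_pad)
qed

lemma game_right_pad_down_lf_left_pad: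
  assumes "wf_game (left_pad X F L)"
  shows "game_lf (right_pad (down X) F' R) (left_pad X F L)"
proof -
  have "game_lf X (left_pad X F L)"
    by (rule game_lf_left_pad[OF game_le_refl])
  with assms have "game_le (down X) (left_pad X F L)"
    by (simp add: game_down_le_iff)
  then show ?thesis
    by (rule game_right_pad_lf)
qed

lemma game_le_bracket_left_pad_up:
  assumes "wf_game Y" "game_lf Y Y" "game_le Y T"
  shows "game_le Y (bracket (left_pad (up Y) F L) T)"
proof (rule game_le_bracket)
  show "game_lf Y (left_pad (up Y) F L)"
    using assms by (intro game_lf_left_pad) (simp add: game_le_up_iff)
  fix YL assume "YL \<in> lopts Y"
  with assms(1) show "game_lf YL (left_pad (up Y) F L)"
    by (intro game_lf_left_pad) (simp add: game_le_up_iff game_le_lf_lopt[OF game_le_refl] wf_game_option)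
qed (use assms in simp_all)

lemma game_bracket_right_pad_down_le:
  assumes "wf_game X" "game_lf X X" "game_le S X"
  shows "game_le (bracket S (right_pad (down X) F R)) X"
proof (rule game_bracket_le)
  show "game_lf (right_pad (down X) F R) X"
    using assms by (intro game_right_pad_lf) (simp add: game_down_le_iff)
  fix XR assume "XR \<in> ropts X"
  with assms(1) show "game_lf (right_pad (down X) F R) XR"
    by (intro game_right_pad_lf) (simp add: game_down_le_iff game_le_lf_ropt[OF game_le_refl] wf_game_option)
qed (use assms in simp_all)

definition lower_approx :: "('a::order, 'i) game \<Rightarrow> ('a, 'j) game \<Rightarrow> bool" where
  "lower_approx G S \<longleftrightarrow> wf_game S \<and> monotone_game S \<and> game_le S G \<and> game_lf G S \<and>
     (\<forall>GL\<in>lopts G. game_lf GL S)"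

definition upper_approx :: "('a::order, 'i) game \<Rightarrow> ('a, 'j) game \<Rightarrow> bool" where
  "upper_approx G T \<longleftrightarrow> wf_game T \<and> monotone_game T \<and> game_le G T \<and> game_lf T G \<and>
     (\<forall>GR\<in>ropts G. game_lf T GR)"

lemma monotone_equiv_bracket:
  assumes G: "wf_game G" and S: "lower_approx G S" and T: "upper_approx G T"
  shows "wf_game (bracket S T) \<and> monotone_game (bracket S T) \<and> game_equiv G (bracket S T)"
proof -
  have below: "game_le (bracket S T) G"
    using G S T by (intro game_bracket_le) (auto simp: lower_approx_def upper_approx_def)
  have above: "game_le G (bracket S T)"
    using G S T by (intro game_le_bracket) (auto simp: lower_approx_def upper_approx_def)
  have "game_lf S S" "game_lf T T" "game_lf (bracket S T) S" "game_lf T (bracket S T)"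
    using S T below above by (auto simp: lower_approx_def upper_approx_def
      intro: game_le_lf_trans game_lf_le_trans)
  with S T have "monotone_game (bracket S T)"
    by (intro monotone_bracket) (simp_all add: lower_approx_def upper_approx_def)
  with S T below above show ?thesis
    by (simp add: lower_approx_def upper_approx_def game_equiv_def)
qed

locale monotone_replacement =
  fixes L R :: "'i set"
    and f :: "'i \<Rightarrow> ('a::{order_bot, order_top}, 'i) game"
    and F :: "'i \<Rightarrow> ('a, 'i) wide_game"
  assumes wf_G: "wf_game (Comp L R f)"
    and passable_f: "\<And>i. i \<in> L \<union> R \<Longrightarrow> passable (f i)"
    and F: "\<And>i. i \<in> L \<union> R \<Longrightarrow> wf_game (F i) \<and> monotone_game (F i) \<and> game_equiv (f i) (F i)"
begin

abbreviation G :: "('a, 'i) game" where "G \<equiv> Comp L R f"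

lemma wf_f: "i \<in> L \<union> R \<Longrightarrow> wf_game (f i)"
  using wf_G by auto

lemma f_le_F: "i \<in> L \<union> R \<Longrightarrow> game_le (f i) (F i)"
  and F_le_f: "i \<in> L \<union> R \<Longrightarrow> game_le (F i) (f i)"
  using F by (simp_all add: game_equiv_def)

lemma F_wf_monotone_lf_self: "i \<in> L \<union> R \<Longrightarrow> wf_game (F i) \<and> monotone_game (F i) \<and> game_lf (F i) (F i)"
  using F passable_lf_self[OF passable_f] f_le_F F_le_f
  by (meson game_le_lf_trans game_lf_le_trans)

lemma F_lf_G: "l \<in> L \<Longrightarrow> game_lf (F l) G"
  using F_le_f game_le_lf_lopt[OF game_le_refl[of G]] by (auto intro: game_le_lf_trans)

lemma G_lf_F: "r \<in> R \<Longrightarrow> game_lf G (F r)"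
  using f_le_F game_le_lf_ropt[OF game_le_refl[of G]] by (auto intro: game_lf_le_trans)

lemma le_right_pad_self:
  assumes "wf_game Y" "game_lf Y Y" "game_le Y G"
  shows "game_le Y (right_pad Y F R)"
  using assms G_lf_F by (intro game_le_right_pad) (auto intro: game_le_lf_trans)

lemma left_pad_le_self:
  assumes "wf_game X" "game_lf X X" "game_le G X"
  shows "game_le (left_pad X F L) X"
  using assms F_lf_G by (intro game_left_pad_le) (auto intro: game_lf_le_trans)

lemma upper_approx_right_pad:
  assumes Y: "wf_game Y" "monotone_game Y" "game_lf Y Y" and "game_le Y G" "game_lf G Y"
  shows "upper_approx G (right_pad Y F R)"
  unfolding upper_approx_def
proof (intro conjI ballI)
  show "wf_game (right_pad Y F R)"
    using Y F_wf_monotone_lf_self by simp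
  show "monotone_game (right_pad Y F R)"
    using Y assms(4) F_wf_monotone_lf_self by (intro monotone_right_pad le_right_pad_self) auto
  show "game_le G (right_pad Y F R)"
    using wf_G assms(5) G_lf_F by (intro game_le_right_pad) auto
  show "game_lf (right_pad Y F R) G"
    using assms(4) by (rule game_right_pad_lf)
  fix GR assume "GR \<in> ropts G"
  then show "game_lf (right_pad Y F R) GR"
    using wf_f F_le_f by (auto intro: game_right_pad_lf_of_le)
qed

lemma lower_approx_left_pad:
  assumes X: "wf_game X" "monotone_game X" "game_lf X X" and "game_le G X" "game_lf X G"
  shows "lower_approx G (left_pad X F L)"
  unfolding lower_approx_def
proof (intro conjI ballI)
  show "wf_game (left_pad X F L)"
    using X F_wf_monotone_lf_self by simp
  show "monotone_game (left_pad X F L)"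
    using X assms(4) F_wf_monotone_lf_self by (intro monotone_left_pad left_pad_le_self) auto
  show "game_le (left_pad X F L) G"
    using wf_G assms(5) F_lf_G by (intro game_left_pad_le) auto
  show "game_lf G (left_pad X F L)"
    using assms(4) by (rule game_lf_left_pad)
  fix GL assume "GL \<in> lopts G"
  then show "game_lf GL (left_pad X F L)"
    using wf_f f_le_F by (auto intro: game_lf_left_pad_of_le)
qed

lemma lower_approx_bracket:
  assumes Y: "wf_game Y" "monotone_game Y" "game_lf Y Y" and "game_le Y G" "game_lf G Y"
  shows "lower_approx G (bracket (left_pad (up Y) F L) (right_pad Y F R))"
proof -
  define Z where "Z = left_pad (up Y) F L"
  define T where "T = right_pad Y F R"
  have T: "upper_approx G T"
    unfolding T_def using assms by (rule upper_approx_right_pad)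
  have wf_Z: "wf_game Z"
    using Y F_wf_monotone_lf_self by (simp add: Z_def)
  have Z_le_up: "game_le Z (up Y)"
    using wf_Z Y by (simp add: game_le_up_iff Z_def game_left_pad_lf)
  have mono_Z: "monotone_game Z"
    using Y Z_le_up F_wf_monotone_lf_self unfolding Z_def by (intro monotone_left_pad monotone_up) auto
  have Z_le_G: "game_le Z G"
    unfolding Z_def using wf_G assms(4) F_lf_G by (intro game_left_pad_le game_up_lf) auto
  have Y_le_bracket: "game_le Y (bracket Z T)"
    unfolding Z_def T_def using Y(1,3) by (intro game_le_bracket_left_pad_up le_right_pad_self assms(4))
  have T_lf_Z: "game_lf T Z"
    using T unfolding Z_def T_def upper_approx_def by (intro game_right_pad_lf_left_pad_up) simp
  show ?thesis
    unfolding Z_def[symmetric] T_def[symmetric] lower_approx_def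
  proof (intro conjI ballI)
    show "wf_game (bracket Z T)"
      using wf_Z T by (simp add: upper_approx_def)
    show "monotone_game (bracket Z T)"
      using wf_Z mono_Z T T_lf_Z
      by (intro monotone_bracket game_bracket_lf game_lf_bracket)
        (auto simp: upper_approx_def Z_def T_def game_left_pad_lf game_lf_right_pad)
    show "game_le (bracket Z T) G"
      using wf_G Z_le_G T by (intro game_bracket_le) (auto simp: upper_approx_def)
    show "game_lf G (bracket Z T)"
      using assms(5) Y_le_bracket by (rule game_lf_le_trans)
    fix GL assume "GL \<in> lopts G"
    then show "game_lf GL (bracket Z T)"
      unfolding Z_def using wf_f f_le_F
      by (auto intro!: game_lf_bracket game_lf_left_pad_of_le)
  qed
qed

lemma upper_approx_bracket:
  assumes X: "wf_game X" "monotone_game X" "game_lf X X" and "game_le G X" "game_lf X G"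
  shows "upper_approx G (bracket (left_pad X F L) (right_pad (down X) F R))"
proof -
  define S where "S = left_pad X F L"
  define Z where "Z = right_pad (down X) F R"
  have S: "lower_approx G S"
    unfolding S_def using assms by (rule lower_approx_left_pad)
  have wf_Z: "wf_game Z"
    using X F_wf_monotone_lf_self by (simp add: Z_def)
  have down_le_Z: "game_le (down X) Z"
    using wf_Z X by (simp add: game_down_le_iff Z_def game_lf_right_pad)
  have mono_Z: "monotone_game Z"
    using X down_le_Z F_wf_monotone_lf_self unfolding Z_def by (intro monotone_right_pad monotone_down) auto
  have G_le_Z: "game_le G Z"
    unfolding Z_def using wf_G assms(4) G_lf_F by (intro game_le_right_pad game_lf_down) auto
  have bracket_le_X: "game_le (bracket S Z) X"
    unfolding S_def Z_def using X(1,3) by (intro game_bracket_right_pad_down_le left_pad_le_self assms(4))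
  have Z_lf_S: "game_lf Z S"
    using S unfolding Z_def S_def lower_approx_def by (intro game_right_pad_down_lf_left_pad) simp
  show ?thesis
    unfolding S_def[symmetric] Z_def[symmetric] upper_approx_def
  proof (intro conjI ballI)
    show "wf_game (bracket S Z)"
      using wf_Z S by (simp add: lower_approx_def)
    show "monotone_game (bracket S Z)"
      using wf_Z mono_Z S Z_lf_S
      by (intro monotone_bracket game_bracket_lf game_lf_bracket)
        (auto simp: lower_approx_def S_def Z_def game_left_pad_lf game_lf_right_pad)
    show "game_le G (bracket S Z)"
      using wf_G G_le_Z S by (intro game_le_bracket) (auto simp: lower_approx_def)
    show "game_lf (bracket S Z) G"
      using bracket_le_X assms(5) by (rule game_le_lf_trans)
    fix GR assume "GR \<in> ropts G"
    then show "game_lf (bracket S Z) GR"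
      unfolding Z_def using wf_f F_le_f
      by (auto intro!: game_bracket_lf game_right_pad_lf_of_le)
  qed
qed

lemma approx_of_right_option_le:
  assumes "r \<in> R" "game_le (f r) G"
  shows "lower_approx G (bracket (left_pad (up (F r)) F L) (right_pad (F r) F R))"
    and "upper_approx G (right_pad (F r) F R)"
proof -
  from assms(1) have r: "r \<in> L \<union> R"
    by simp
  have "game_le (F r) G"
    using F_le_f[OF r] assms(2) by (rule game_le_trans)
  moreover have "game_lf G (F r)"
    using assms(1) f_le_F[OF r] by (intro lf_right[of "f r"]) simp_all
  ultimately show "lower_approx G (bracket (left_pad (up (F r)) F L) (right_pad (F r) F R))"
    and "upper_approx G (right_pad (F r) F R)"
    using F_wf_monotone_lf_self[OF r] by (simp_all add: lower_approx_bracket upper_approx_right_pad)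
qed

lemma approx_of_le_left_option:
  assumes "l \<in> L" "game_le G (f l)"
  shows "lower_approx G (left_pad (F l) F L)"
    and "upper_approx G (bracket (left_pad (F l) F L) (right_pad (down (F l)) F R))"
proof -
  from assms(1) have l: "l \<in> L \<union> R"
    by simp
  have "game_le G (F l)"
    using assms(2) f_le_F[OF l] by (rule game_le_trans)
  moreover have "game_lf (F l) G"
    using assms(1) F_le_f[OF l] by (intro lf_left[of "f l"]) simp_all
  ultimately show "lower_approx G (left_pad (F l) F L)"
    and "upper_approx G (bracket (left_pad (F l) F L) (right_pad (down (F l)) F R))"
    using F_wf_monotone_lf_self[OF l] by (simp_all add: lower_approx_left_pad upper_approx_bracket)
qed

lemma monotone_equiv_exists:
  assumes "passable G"
  shows "\<exists>H :: ('a, 'i) wide_game. wf_game H \<and> monotone_game H \<and> game_equiv G H"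
proof -
  from assms have "game_lf G G"
    by (rule passable_lf_self)
  then consider (right) r where "r \<in> R" "game_le (f r) G" | (left) l where "l \<in> L" "game_le G (f l)"
    unfolding game_lf_iff by auto
  then obtain S T :: "('a, 'i) wide_game" where "lower_approx G S" "upper_approx G T"
  proof cases
    case right
    show ?thesis using approx_of_right_option_le[OF right] by (rule that)
  next
    case left
    show ?thesis using approx_of_le_left_option[OF left] by (rule that)
  qed
  with wf_G have "wf_game (bracket S T) \<and> monotone_game (bracket S T) \<and> game_equiv G (bracket S T)"
    by (rule monotone_equiv_bracket)
  then show ?thesis
    by blast
qed

end

theorem theorem6p5:
  fixes G :: "('a::{order_bot, order_top}, 'i) game"
  assumes "wf_game G" and "passable G"
  shows "\<exists>H :: ('a, ('a, 'i) game set) game. wf_game H \<and> monotone_game H \<and> game_equiv G H"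
  using assms
proof (induction G)
  case (Atom a)
  show ?case
    by (rule exI[of _ "Atom a"]) (simp add: game_equiv_def game_le_Atom)
next
  case (Comp L R f)
  have "\<exists>H :: ('a, 'i) wide_game. wf_game H \<and> monotone_game H \<and> game_equiv (f i) H"
    if "i \<in> L \<union> R" for i
  proof (rule Comp.IH[OF rangeI])
    show "wf_game (f i)" "passable (f i)"
      using Comp.prems that by auto
  qed
  then obtain F :: "'i \<Rightarrow> ('a, 'i) wide_game"
    where "\<And>i. i \<in> L \<union> R \<Longrightarrow> wf_game (F i) \<and> monotone_game (F i) \<and> game_equiv (f i) (F i)"
    by metis
  with Comp.prems interpret monotone_replacement L R f F
    by unfold_locales auto
  show ?case
    using Comp.prems(2) by (rule monotone_equiv_exists)
qed

end
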